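(* For all integers $1\le t\le n$, the $t$-out-of-$n$ function $f_{t,n}:\{0,1\}^n\to\{0,1\}$, defined by $f_{t,n}(x)=1$ if $\sum_{i=1}^n x_i\ge t$ and $f_{t,n}(x)=0$ otherwise, has a quadratization using $\lceil n/2\rceil$ auxiliary variables.
   Context: A quadratization of $f:\{0,1\}^n\to\mathbb{R}$ using $m$ auxiliary variables is a polynomial $g(x,y)$ of degree at most $2$ in $x_1,\ldots,x_n,y_1,\ldots,y_m$ such that $f(x)=\min\{g(x,y):y\in\{0,1\}^m\}$ for all $x\in\{0,1\}^n$. *)

theory Defs
  imports Complex_Main
begin

text \<open>Variables of a quadratization: Inl i stands for x_i (i < n), Inr j for y_j (j < m).\<close>

definition vars :: "nat \<Rightarrow> nat \<Rightarrow> (nat + nat) set" where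
  "vars n m = Inl ` {..<n} \<union> Inr ` {..<m}"

definition eval_quad ::
  "nat \<Rightarrow> nat \<Rightarrow> real \<Rightarrow> (nat + nat \<Rightarrow> real) \<Rightarrow> (nat + nat \<Rightarrow> nat + nat \<Rightarrow> real)
     \<Rightarrow> (nat + nat \<Rightarrow> real) \<Rightarrow> real" where
  "eval_quad n m c a b z =
     c + (\<Sum>v\<in>vars n m. a v * z v) + (\<Sum>v\<in>vars n m. \<Sum>w\<in>vars n m. b v w * z v * z w)"

definition point :: "(nat \<Rightarrow> bool) \<Rightarrow> (nat \<Rightarrow> bool) \<Rightarrow> nat + nat \<Rightarrow> real" where
  "point x y v = (case v of Inl i \<Rightarrow> (if x i then 1 else 0) | Inr j \<Rightarrow> (if y j then 1 else 0))"

definition cube :: "nat \<Rightarrow> (nat \<Rightarrow> bool) set" where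
  "cube k = {x. \<forall>i. k \<le> i \<longrightarrow> \<not> x i}"

definition is_quadratization ::
  "nat \<Rightarrow> ((nat \<Rightarrow> bool) \<Rightarrow> real) \<Rightarrow> nat \<Rightarrow> real \<Rightarrow> (nat + nat \<Rightarrow> real)
     \<Rightarrow> (nat + nat \<Rightarrow> nat + nat \<Rightarrow> real) \<Rightarrow> bool" where
  "is_quadratization n f m c a b \<longleftrightarrow>
     (\<forall>x\<in>cube n. f x = Min ((\<lambda>y. eval_quad n m c a b (point x y)) ` cube m))"

definition has_quadratization :: "nat \<Rightarrow> ((nat \<Rightarrow> bool) \<Rightarrow> real) \<Rightarrow> nat \<Rightarrow> bool" where
  "has_quadratization n f m \<longleftrightarrow> (\<exists>c a b. is_quadratization n f m c a b)"

definition t_out_of_n :: "nat \<Rightarrow> nat \<Rightarrow> (nat \<Rightarrow> bool) \<Rightarrow> real" where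
  "t_out_of_n t n x = (if card {i. i < n \<and> x i} \<ge> t then 1 else 0)"

end

theory Submission
  imports Defs
begin

(* Write m = p + 1 for the number of auxiliary variables and let y_p be the
   distinguished last one.  With S = |x| the Hamming weight, consider the integer linear form
     T(x,y) = S - 2 (y_0 + ... + y_{p-1}) + (2p + 3 - t) y_p
   and the quadratic polynomial
     g(x,y) = 2 - 3/2 T - y_p + T^2/2 = 1 - y_p + (T - 1)(T - 2)/2.
   Since (T - 1)(T - 2) is a non-negative even integer, vanishing exactly for T in {1,2}, g is
   at least 0 always, at least 1 when y_p = 0, and also at least 1 when y_p = 1 and T >= 3.
   If S >= t, then y_p = 1 forces T >= 3, so g >= 1, and choosing y_p = 0 with
   (S - 1) div 2 further ones makes T in {1,2} and g = 1.  If S < t, then g >= 0, and choosing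
   y_p = 1 with (S + 2p + 2 - t) div 2 further ones makes T in {1,2} and g = 0.  Both choices
   need at most p ones among y_0..y_{p-1} precisely because n <= 2(p + 1). *)

lemma finite_cube: "finite (cube m)"
proof -
  have "cube m \<subseteq> (\<lambda>A i. i \<in> A) ` Pow {..<m}"
  proof
    fix y assume "y \<in> cube m"
    hence "y = (\<lambda>i. i \<in> {i. i < m \<and> y i})"
      unfolding cube_def fun_eq_iff by (metis (mono_tags) mem_Collect_eq not_le)
    thus "y \<in> (\<lambda>A i. i \<in> A) ` Pow {..<m}" by blast
  qed
  thus ?thesis by (rule finite_subset) auto
qed

lemma Min_image_eqI:
  fixes g :: "'a \<Rightarrow> 'b::linorder"
  assumes "finite A" and "\<And>y. y \<in> A \<Longrightarrow> v \<le> g y" and "y0 \<in> A" and "g y0 = v"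
  shows "Min (g ` A) = v"
  using assms by (intro Min_eqI) auto

lemma sum_indicator_card:
  "(\<Sum>i<(n::nat). if x i then 1 else 0 :: real) = real (card {i. i < n \<and> x i})"
proof -
  have "(\<Sum>i<n. if x i then 1 else 0 :: real) = (\<Sum>i\<in>{i\<in>{..<n}. x i}. 1)"
    by (rule sum.inter_filter[symmetric]) simp
  also have "{i\<in>{..<n}. x i} = {i. i < n \<and> x i}" by auto
  finally show ?thesis by simp
qed

lemma eval_quad_square_form:
  fixes L e z :: "nat + nat \<Rightarrow> real" and n m :: nat
  defines "val \<equiv> \<Sum>v\<in>vars n m. L v * z v"
  shows "eval_quad n m c (\<lambda>v. \<alpha> * L v + e v) (\<lambda>v w. \<beta> * L v * L w) z
           = c + \<alpha> * val + (\<Sum>v\<in>vars n m. e v * z v) + \<beta> * val\<^sup>2"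
proof -
  let ?V = "vars n m"
  have lin: "(\<Sum>v\<in>?V. (\<alpha> * L v + e v) * z v) = \<alpha> * val + (\<Sum>v\<in>?V. e v * z v)"
    unfolding val_def by (simp add: algebra_simps sum.distrib sum_distrib_left)
  have "val\<^sup>2 = (\<Sum>v\<in>?V. \<Sum>w\<in>?V. (L v * z v) * (L w * z w))"
    unfolding val_def by (simp add: power2_eq_square sum_product)
  hence quad: "(\<Sum>v\<in>?V. \<Sum>w\<in>?V. \<beta> * L v * L w * z v * z w) = \<beta> * val\<^sup>2"
    by (simp add: sum_distrib_left mult_ac)
  show ?thesis unfolding eval_quad_def lin quad by simp
qed

definition weight :: "nat \<Rightarrow> real \<Rightarrow> nat + nat \<Rightarrow> real" where
  "weight p k v = (case v of Inl i \<Rightarrow> 1 | Inr j \<Rightarrow> if j = p then k else -2)"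

text \<open>The coefficients of g = 2 - 3/2 T - y_p + T^2/2, with k = 2p + 3 - t.\<close>

definition quad_lin :: "nat \<Rightarrow> nat \<Rightarrow> nat + nat \<Rightarrow> real" where
  "quad_lin t p v = -3/2 * weight p (real (2*p+3) - real t) v + (if v = Inr p then -1 else 0)"

definition quad_bilin :: "nat \<Rightarrow> nat \<Rightarrow> nat + nat \<Rightarrow> nat + nat \<Rightarrow> real" where
  "quad_bilin t p v w = 1/2 * weight p (real (2*p+3) - real t) v * weight p (real (2*p+3) - real t) w"

lemma weight_at_point:
  "(\<Sum>v\<in>vars n (Suc p). weight p k v * point x y v)
     = real (card {i. i < n \<and> x i}) - 2 * real (card {j. j < p \<and> y j})
       + k * (if y p then 1 else 0)"
proof -
  have "(\<Sum>v\<in>vars n (Suc p). weight p k v * point x y v)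
      = (\<Sum>v\<in>Inl ` {..<n}. weight p k v * point x y v)
        + (\<Sum>v\<in>Inr ` {..<Suc p}. weight p k v * point x y v)"
    unfolding vars_def by (rule sum.union_disjoint) auto
  also have "(\<Sum>v\<in>Inl ` {..<n}. weight p k v * point x y v) = (\<Sum>i<n. if x i then 1 else 0)"
    by (simp add: sum.reindex weight_def point_def)
  also have "(\<Sum>v\<in>Inr ` {..<Suc p}. weight p k v * point x y v)
      = -2 * (\<Sum>j<p. if y j then 1 else 0) + k * (if y p then 1 else 0)"
    by (simp add: sum.reindex weight_def point_def sum_distrib_left)
  finally show ?thesis by (simp add: sum_indicator_card)
qed

definition lin_form :: "nat \<Rightarrow> nat \<Rightarrow> nat \<Rightarrow> (nat \<Rightarrow> bool) \<Rightarrow> (nat \<Rightarrow> bool) \<Rightarrow> int" where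
  "lin_form t n p x y = int (card {i. i < n \<and> x i}) - 2 * int (card {j. j < p \<and> y j})
     + (int (2*p+3) - int t) * (if y p then 1 else 0)"

lemma eval_quad_at_point:
  "eval_quad n (Suc p) 2 (quad_lin t p) (quad_bilin t p) (point x y)
     = 1 - (if y p then 1 else 0)
       + of_int ((lin_form t n p x y - 1) * (lin_form t n p x y - 2)) / 2"
proof -
  let ?L = "weight p (real (2*p+3) - real t)"
  let ?T = "real_of_int (lin_form t n p x y)"
  have T: "(\<Sum>v\<in>vars n (Suc p). ?L v * point x y v) = ?T"
    unfolding weight_at_point lin_form_def by (simp add: of_nat_diff)
  have "(\<Sum>v\<in>vars n (Suc p). (if v = Inr p then -1 else 0) * point x y v)
      = (\<Sum>v\<in>vars n (Suc p). if v = Inr p then - point x y v else 0)"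
    by (rule sum.cong) auto
  also have "\<dots> = - (if y p then 1 else 0)"
    by (simp add: sum.delta vars_def point_def)
  finally have e: "(\<Sum>v\<in>vars n (Suc p). (if v = Inr p then -1 else 0) * point x y v)
      = - (if y p then 1 else 0)" .
  have "eval_quad n (Suc p) 2 (quad_lin t p) (quad_bilin t p) (point x y)
      = 2 + -3/2 * ?T - (if y p then 1 else 0) + 1/2 * ?T\<^sup>2"
    using eval_quad_square_form[of n "Suc p" 2 "-3/2" ?L "\<lambda>v. if v = Inr p then -1 else 0" "1/2"
        "point x y"]
    unfolding T e quad_lin_def[abs_def] quad_bilin_def[abs_def] by (simp add: mult.assoc)
  also have "\<dots> = 1 - (if y p then 1 else 0) + (?T - 1) * (?T - 2) / 2"
    by (simp add: power2_eq_square field_simps)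
  finally show ?thesis by simp
qed

lemma shifted_product_nonneg: "0 \<le> (T - 1) * (T - 2 :: int)"
  by (cases "T \<le> 1") (auto intro: mult_nonpos_nonpos)

lemma shifted_product_ge_two:
  assumes "3 \<le> T"
  shows "2 \<le> (T - 1) * (T - 2 :: int)"
proof -
  have "2 * 1 \<le> (T - 1) * (T - 2)" using assms by (intro mult_mono) auto
  thus ?thesis by simp
qed

lemma t_out_of_n_le_eval_quad:
  "t_out_of_n t n x \<le> eval_quad n (Suc p) 2 (quad_lin t p) (quad_bilin t p) (point x y)"
proof -
  define T where "T = lin_form t n p x y"
  have nonneg: "0 \<le> real_of_int ((T - 1) * (T - 2))"
    using shifted_product_nonneg[of T] by linarith
  show ?thesis
  proof (cases "t \<le> card {i. i < n \<and> x i}")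
    case above: True
    have "1 \<le> 1 - (if y p then 1 else 0) + real_of_int ((T - 1) * (T - 2)) / 2"
    proof (cases "y p")
      case True
      have "card {j. j < p \<and> y j} \<le> card {..<p}" by (intro card_mono) auto
      hence "3 \<le> T" using above True unfolding T_def lin_form_def by simp
      hence "2 \<le> real_of_int ((T - 1) * (T - 2))"
        using shifted_product_ge_two[of T] by linarith
      thus ?thesis using True by simp
    qed (use nonneg in simp)
    thus ?thesis using above unfolding eval_quad_at_point T_def t_out_of_n_def by simp
  next
    case False
    thus ?thesis using nonneg unfolding eval_quad_at_point T_def t_out_of_n_def by simp
  qed
qed

lemma sub_twice_half_plus_one: "int M - 2 * int (M div 2) + 1 \<in> {1, 2}"
proof -
  have "int M = 2 * int (M div 2) + int (M mod 2)"
    using div_mult_mod_eq[of M 2] by (metis mult.commute of_nat_add of_nat_mult of_nat_numeral)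
  moreover have "M mod 2 = 0 \<or> M mod 2 = 1" by presburger
  ultimately show ?thesis by auto
qed

definition witness :: "nat \<Rightarrow> nat \<Rightarrow> bool \<Rightarrow> nat \<Rightarrow> bool" where
  "witness p Y b j \<longleftrightarrow> j < Y \<or> (j = p \<and> b)"

lemma witness_in_cube: "Y \<le> p \<Longrightarrow> witness p Y b \<in> cube (Suc p)"
  unfolding cube_def witness_def by auto

lemma lin_form_witness:
  assumes "Y \<le> p"
  shows "lin_form t n p x (witness p Y b)
           = int (card {i. i < n \<and> x i}) - 2 * int Y + (int (2*p+3) - int t) * (if b then 1 else 0)"
proof -
  have "{j. j < p \<and> witness p Y b j} = {..<Y}" and "witness p Y b p = b"
    using assms unfolding witness_def by auto
  thus ?thesis unfolding lin_form_def by simp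
qed

text \<open>Both witnesses use at most p ones among y_0, ..., y_(p-1)
  exactly because n <= 2(p + 1).\<close>

lemma eval_quad_attains_t_out_of_n:
  assumes "1 \<le> t" and "t \<le> n" and "n \<le> 2 * Suc p"
  shows "\<exists>y\<in>cube (Suc p).
           eval_quad n (Suc p) 2 (quad_lin t p) (quad_bilin t p) (point x y) = t_out_of_n t n x"
proof -
  define S where "S = card {i. i < n \<and> x i}"
  have "S \<le> card {..<n}" unfolding S_def by (intro card_mono) auto
  hence S_le: "S \<le> n" by simp
  have value_at: "eval_quad n (Suc p) 2 (quad_lin t p) (quad_bilin t p) (point x (witness p Y b))
      = 1 - (if b then 1 else 0)"
    if "Y \<le> p" and "lin_form t n p x (witness p Y b) \<in> {1, 2}" for Y b
    using that unfolding eval_quad_at_point by (auto simp: witness_def)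
  show ?thesis
  proof (cases "t \<le> S")
    case True
    define Y where "Y = (S - 1) div 2"
    have Y: "Y \<le> p" unfolding Y_def using S_le assms(3) by presburger
    have "lin_form t n p x (witness p Y False) \<in> {1, 2}"
      unfolding lin_form_witness[OF Y] S_def[symmetric]
      using sub_twice_half_plus_one[of "S - 1"] True assms(1) by (simp add: Y_def of_nat_diff)
    thus ?thesis using True witness_in_cube[OF Y] value_at[OF Y]
      unfolding t_out_of_n_def S_def by fastforce
  next
    case False
    define Y where "Y = (S + 2*p + 2 - t) div 2"
    have Y: "Y \<le> p" unfolding Y_def using False assms(2,3) by presburger
    have "lin_form t n p x (witness p Y True) \<in> {1, 2}"
      unfolding lin_form_witness[OF Y] S_def[symmetric]
      using sub_twice_half_plus_one[of "S + 2*p + 2 - t"] assms(2,3)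
      by (simp add: Y_def of_nat_diff algebra_simps)
    thus ?thesis using False witness_in_cube[OF Y] value_at[OF Y]
      unfolding t_out_of_n_def S_def by fastforce
  qed
qed

lemma t_out_of_n_quadratization:
  assumes "1 \<le> t" and "t \<le> n" and "n \<le> 2 * Suc p"
  shows "is_quadratization n (t_out_of_n t n) (Suc p) 2 (quad_lin t p) (quad_bilin t p)"
  unfolding is_quadratization_def
proof
  fix x
  obtain y where "y \<in> cube (Suc p)"
    and "eval_quad n (Suc p) 2 (quad_lin t p) (quad_bilin t p) (point x y) = t_out_of_n t n x"
    using eval_quad_attains_t_out_of_n[OF assms] by blast
  thus "t_out_of_n t n x
          = Min ((\<lambda>y. eval_quad n (Suc p) 2 (quad_lin t p) (quad_bilin t p) (point x y)) ` cube (Suc p))"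
    by (intro Min_image_eqI[symmetric] finite_cube t_out_of_n_le_eval_quad)
qed

lemma nat_ceiling_half: "nat \<lceil>real n / 2\<rceil> = (n + 1) div 2"
proof -
  have "\<lceil>real n / 2\<rceil> = int ((n + 1) div 2)"
    by (rule ceiling_unique) linarith+
  thus ?thesis by simp
qed

theorem corollary3:
  fixes t n :: nat
  assumes "1 \<le> t" and "t \<le> n"
  shows "has_quadratization n (t_out_of_n t n) (nat \<lceil>real n / 2\<rceil>)"
proof -
  define p where "p = (n + 1) div 2 - 1"
  have m: "nat \<lceil>real n / 2\<rceil> = Suc p" and n_le: "n \<le> 2 * Suc p"
    using assms unfolding nat_ceiling_half p_def by presburger+
  show ?thesis
    unfolding has_quadratization_def m using t_out_of_n_quadratization[OF assms n_le] by blast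
qed

end
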